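(* If a graph $G$ is coarsely bottlenecked, then the natural map $f:G\to G_{\lambda,k}$ is a quasi-isometry for all $\lambda$ and all $k$.
   Context: All graphs are connected (and unbounded); multi-edges are allowed; $d$ is the graph metric on vertices. Sets $X,Y$ are $M$-disjoint if $d(x,y)>M$ for all $x\in X,y\in Y$; $X$ is $M$-connected if any two of its points are joined by a finite sequence in $X$ with consecutive distances $\le M$; $N_M(S)=\{y:d(s,y)<M\text{ for some }s\in S\}$. $G$ is $M$-fat $n$-bottlenecked if for any two connected $M$-disjoint subgraphs $X,Y\subset G$ there is $S\subset V(G)\setminus(V(X)\cup V(Y))$ with $|S|=n$ such that every path from a vertex of $X$ to a vertex of $Y$ meets $N_M(S)$; $G$ is coarsely bottlenecked if this holds for some $M,n\in\mathbb N$. Skeleton $G_{\lambda,k}$ (root $x_0\in V(G)$, scale $\lambda\ge1$, connectivity $k\ge1$): layers $A_{N,\lambda}=\{x: N\lambda<d(x,x_0)\le(N+1)\lambda\}$, $N\in\mathbb Z$; blocks are the maximal $k$-connected subsets of layers; $G_{\lambda,k}$ has a vertex per block and an edge between two blocks iff an edge of $G$ joins them. The natural map $f$ sends each vertex of $G$ to its block. *)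

theory Defs
  imports Complex_Main
begin

text \<open>A graph is given by a vertex set V and a symmetric adjacency relation E
  (multi-edges are irrelevant for the graph metric).\<close>

definition walk :: "('a \<Rightarrow> 'a \<Rightarrow> bool) \<Rightarrow> 'a list \<Rightarrow> bool" where
  "walk E xs \<longleftrightarrow> xs \<noteq> [] \<and> (\<forall>i. Suc i < length xs \<longrightarrow> E (xs ! i) (xs ! Suc i))"

definition gpath :: "('a \<Rightarrow> 'a \<Rightarrow> bool) \<Rightarrow> 'a list \<Rightarrow> bool" where
  "gpath E xs \<longleftrightarrow> walk E xs \<and> distinct xs"

definition gdist :: "('a \<Rightarrow> 'a \<Rightarrow> bool) \<Rightarrow> 'a \<Rightarrow> 'a \<Rightarrow> nat" where
  "gdist E x y = (LEAST n. \<exists>xs. walk E xs \<and> hd xs = x \<and> last xs = y \<and> length xs = Suc n)"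

definition graph :: "'a set \<Rightarrow> ('a \<Rightarrow> 'a \<Rightarrow> bool) \<Rightarrow> bool" where
  "graph V E \<longleftrightarrow> (\<forall>x y. E x y \<longrightarrow> x \<in> V \<and> y \<in> V \<and> E y x)"

definition connected_graph :: "'a set \<Rightarrow> ('a \<Rightarrow> 'a \<Rightarrow> bool) \<Rightarrow> bool" where
  "connected_graph V E \<longleftrightarrow> V \<noteq> {} \<and>
     (\<forall>x\<in>V. \<forall>y\<in>V. \<exists>xs. walk E xs \<and> hd xs = x \<and> last xs = y)"

definition unbounded_graph :: "'a set \<Rightarrow> ('a \<Rightarrow> 'a \<Rightarrow> bool) \<Rightarrow> bool" where
  "unbounded_graph V E \<longleftrightarrow> (\<forall>n. \<exists>x\<in>V. \<exists>y\<in>V. gdist E x y > n)"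

definition connected_subgraph :: "'a set \<Rightarrow> ('a \<Rightarrow> 'a \<Rightarrow> bool) \<Rightarrow> 'a set \<Rightarrow> bool" where
  "connected_subgraph V E S \<longleftrightarrow> S \<noteq> {} \<and> S \<subseteq> V \<and>
     (\<forall>x\<in>S. \<forall>y\<in>S. \<exists>xs. walk E xs \<and> set xs \<subseteq> S \<and> hd xs = x \<and> last xs = y)"

definition M_disjoint :: "('a \<Rightarrow> 'a \<Rightarrow> bool) \<Rightarrow> nat \<Rightarrow> 'a set \<Rightarrow> 'a set \<Rightarrow> bool" where
  "M_disjoint E M X Y \<longleftrightarrow> (\<forall>x\<in>X. \<forall>y\<in>Y. gdist E x y > M)"

definition nbhd :: "'a set \<Rightarrow> ('a \<Rightarrow> 'a \<Rightarrow> bool) \<Rightarrow> nat \<Rightarrow> 'a set \<Rightarrow> 'a set" where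
  "nbhd V E M S = {y\<in>V. \<exists>s\<in>S. gdist E s y < M}"

definition fat_bottlenecked :: "'a set \<Rightarrow> ('a \<Rightarrow> 'a \<Rightarrow> bool) \<Rightarrow> nat \<Rightarrow> nat \<Rightarrow> bool" where
  "fat_bottlenecked V E M n \<longleftrightarrow>
     (\<forall>X Y. connected_subgraph V E X \<and> connected_subgraph V E Y \<and> M_disjoint E M X Y \<longrightarrow>
        (\<exists>S. S \<subseteq> V - (X \<union> Y) \<and> finite S \<and> card S = n \<and>
           (\<forall>xs. gpath E xs \<and> hd xs \<in> X \<and> last xs \<in> Y \<longrightarrow>
                 (\<exists>v\<in>set xs. v \<in> nbhd V E M S))))"

definition coarsely_bottlenecked :: "'a set \<Rightarrow> ('a \<Rightarrow> 'a \<Rightarrow> bool) \<Rightarrow> bool" where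
  "coarsely_bottlenecked V E \<longleftrightarrow> (\<exists>M n. fat_bottlenecked V E M n)"

definition M_connected :: "('a \<Rightarrow> 'a \<Rightarrow> bool) \<Rightarrow> real \<Rightarrow> 'a set \<Rightarrow> bool" where
  "M_connected E M X \<longleftrightarrow> (\<forall>x\<in>X. \<forall>y\<in>X. \<exists>xs. xs \<noteq> [] \<and> set xs \<subseteq> X \<and> hd xs = x \<and> last xs = y \<and>
       (\<forall>i. Suc i < length xs \<longrightarrow> real (gdist E (xs ! i) (xs ! Suc i)) \<le> M))"

definition layer :: "'a set \<Rightarrow> ('a \<Rightarrow> 'a \<Rightarrow> bool) \<Rightarrow> 'a \<Rightarrow> real \<Rightarrow> int \<Rightarrow> 'a set" where
  "layer V E x0 lam N = {x\<in>V. real_of_int N * lam < real (gdist E x x0) \<and>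
                                real (gdist E x x0) \<le> (real_of_int N + 1) * lam}"

definition is_block :: "'a set \<Rightarrow> ('a \<Rightarrow> 'a \<Rightarrow> bool) \<Rightarrow> 'a \<Rightarrow> real \<Rightarrow> real \<Rightarrow> 'a set \<Rightarrow> bool" where
  "is_block V E x0 lam k B \<longleftrightarrow> B \<noteq> {} \<and>
     (\<exists>N. B \<subseteq> layer V E x0 lam N \<and> M_connected E k B \<and>
          (\<forall>B'. B \<subseteq> B' \<and> B' \<subseteq> layer V E x0 lam N \<and> M_connected E k B' \<longrightarrow> B' = B))"

definition skel_V :: "'a set \<Rightarrow> ('a \<Rightarrow> 'a \<Rightarrow> bool) \<Rightarrow> 'a \<Rightarrow> real \<Rightarrow> real \<Rightarrow> 'a set set" where
  "skel_V V E x0 lam k = {B. is_block V E x0 lam k B}"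

definition skel_E :: "'a set \<Rightarrow> ('a \<Rightarrow> 'a \<Rightarrow> bool) \<Rightarrow> 'a \<Rightarrow> real \<Rightarrow> real \<Rightarrow> 'a set \<Rightarrow> 'a set \<Rightarrow> bool" where
  "skel_E V E x0 lam k B B' \<longleftrightarrow> is_block V E x0 lam k B \<and> is_block V E x0 lam k B' \<and>
     (\<exists>x\<in>B. \<exists>y\<in>B'. E x y)"

definition skel_map :: "'a set \<Rightarrow> ('a \<Rightarrow> 'a \<Rightarrow> bool) \<Rightarrow> 'a \<Rightarrow> real \<Rightarrow> real \<Rightarrow> 'a \<Rightarrow> 'a set" where
  "skel_map V E x0 lam k x = (THE B. is_block V E x0 lam k B \<and> x \<in> B)"

definition quasi_isometry ::
  "'a set \<Rightarrow> ('a \<Rightarrow> 'a \<Rightarrow> nat) \<Rightarrow> 'b set \<Rightarrow> ('b \<Rightarrow> 'b \<Rightarrow> nat) \<Rightarrow> ('a \<Rightarrow> 'b) \<Rightarrow> bool" where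
  "quasi_isometry V d V' d' f \<longleftrightarrow> (f ` V \<subseteq> V') \<and>
     (\<exists>L C::real. L \<ge> 1 \<and> C \<ge> 0 \<and>
        (\<forall>x\<in>V. \<forall>y\<in>V. real (d x y) / L - C \<le> real (d' (f x) (f y)) \<and>
                        real (d' (f x) (f y)) \<le> L * real (d x y) + C) \<and>
        (\<forall>y\<in>V'. \<exists>x\<in>V. real (d' (f x) y) \<le> C))"

end

theory Submission
  imports Defs
begin

text \<open>
  Blocks are k-connected pieces of annuli of width lam around x0. In a coarsely bottlenecked
  graph they have uniformly bounded diameter: two points of a block are joined by a walk P within
  distance k of the block, and a fat bottleneck of n points separating P from a slightly smaller
  ball around x0 is crossed by every geodesic from x0 to P. These geodesics cross it near the
  sphere of that ball, so P lies in n balls of bounded radius, which bounds the distance between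
  the ends of P. Given a bound D on the diameters of blocks, the natural map is surjective and
  1-Lipschitz, and points of two blocks joined by a skeleton path of length m are at distance at
  most (D + 1) m + D.
\<close>

lemma walk_iff_successively: "walk R xs \<longleftrightarrow> xs \<noteq> [] \<and> successively R xs"
  unfolding walk_def successively_conv_nth by simp

lemma walk_singleton [simp]: "walk R [x]"
  by (simp add: walk_iff_successively)

lemma walk_Cons_Cons [simp]: "walk R (x # y # xs) \<longleftrightarrow> R x y \<and> walk R (y # xs)"
  by (simp add: walk_iff_successively)

lemma walk_nonempty: "walk R xs \<Longrightarrow> xs \<noteq> []"
  by (simp add: walk_def)

lemma walk_join:
  assumes "walk R xs" "walk R ys" "last xs = hd ys"
  shows "walk R (xs @ tl ys)" and "hd (xs @ tl ys) = hd xs" and "last (xs @ tl ys) = last ys"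
    and "set (xs @ tl ys) \<subseteq> set xs \<union> set ys" and "length (xs @ tl ys) = length xs + length ys - 1"
proof -
  obtain y ys' where ys: "ys = y # ys'"
    using walk_nonempty[OF assms(2)] by (cases ys) auto
  show "walk R (xs @ tl ys)"
    using assms ys by (cases ys') (auto simp: walk_iff_successively successively_append_iff)
  show "hd (xs @ tl ys) = hd xs" "length (xs @ tl ys) = length xs + length ys - 1"
    using assms ys by (auto simp: walk_def)
  show "last (xs @ tl ys) = last ys" using assms ys by (cases ys') auto
  show "set (xs @ tl ys) \<subseteq> set xs \<union> set ys" using ys by auto
qed

lemma walk_appendD:
  assumes "walk R (ys @ zs)" "ys \<noteq> []" "zs \<noteq> []"
  shows "walk R ys" "walk R zs" "R (last ys) (hd zs)"
  using assms by (auto simp: walk_iff_successively successively_append_iff)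

lemma walk_rev: "symp R \<Longrightarrow> walk R xs \<Longrightarrow> walk R (rev xs)"
  by (auto simp: walk_iff_successively successively_rev elim: successively_mono dest: sympD)

lemma walk_take: "walk R xs \<Longrightarrow> walk R (take (Suc i) xs)"
  unfolding walk_def by auto

lemma walk_drop: "walk R xs \<Longrightarrow> i < length xs \<Longrightarrow> walk R (drop i xs)"
  unfolding walk_def by auto

lemma last_take_Suc: "i < length xs \<Longrightarrow> last (take (Suc i) xs) = xs ! i"
  by (simp add: take_Suc_conv_app_nth)

lemma walk_prefix_reaches:
  assumes "walk R xs" "z \<in> set xs"
  shows "\<exists>zs. walk R zs \<and> set zs \<subseteq> set xs \<and> hd zs = hd xs \<and> last zs = z"
proof -
  obtain i where "i < length xs" "z = xs ! i" using assms(2) by (metis in_set_conv_nth)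
  then show ?thesis
    using assms(1) walk_take[OF assms(1), of i] set_take_subset[of "Suc i" xs]
    by (intro exI[of _ "take (Suc i) xs"]) (auto simp: last_take_Suc walk_def)
qed

lemma graph_symp: "graph V E \<Longrightarrow> symp E"
  unfolding graph_def by (blast intro: sympI)

lemma walk_in_vertices:
  assumes "graph V E" "walk E xs" "hd xs \<in> V" shows "set xs \<subseteq> V"
  using assms(2,3)
proof (induction xs rule: induct_list012)
  case (3 x y zs)
  then show ?case using assms(1) by (auto simp: graph_def)
qed auto

lemma walk_map:
  assumes "walk R xs" "\<And>a b. a \<in> set xs \<Longrightarrow> b \<in> set xs \<Longrightarrow> R a b \<Longrightarrow> R' (h a) (h b)"
  shows "walk R' (map h xs)"
  using assms unfolding walk_def by (auto simp: nth_mem)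

lemma split_after_last:
  assumes "x \<in> set xs" "Q x"
  obtains ys zs where "xs = ys @ zs" "ys \<noteq> []" "Q (last ys)" "\<forall>z\<in>set zs. \<not> Q z"
proof
  let ?ys = "rev (dropWhile (\<lambda>z. \<not> Q z) (rev xs))" and ?zs = "rev (takeWhile (\<lambda>z. \<not> Q z) (rev xs))"
  show "xs = ?ys @ ?zs" by (metis rev_append rev_rev_ident takeWhile_dropWhile_id)
  show "?ys \<noteq> []" using assms by (auto simp: dropWhile_eq_Nil_conv)
  then show "Q (last ?ys)" using hd_dropWhile[of "\<lambda>z. \<not> Q z" "rev xs"] by (auto simp: last_rev)
  show "\<forall>z\<in>set ?zs. \<not> Q z" by (auto dest: set_takeWhileD)
qed

lemma gdist_le_walk: "walk R xs \<Longrightarrow> gdist R (hd xs) (last xs) \<le> length xs - 1"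
  unfolding gdist_def by (rule Least_le) (auto simp: walk_def)

lemma gdist_self [simp]: "gdist R x x = 0"
  using gdist_le_walk[of R "[x]"] by simp

lemma gdist_edge: "R x y \<Longrightarrow> gdist R x y \<le> 1"
  using gdist_le_walk[of R "[x, y]"] by simp

lemma gdist_sym:
  assumes "symp R" shows "gdist R x y = gdist R y x"
proof -
  have "(\<exists>xs. walk R xs \<and> hd xs = x \<and> last xs = y \<and> length xs = Suc n) \<longleftrightarrow>
        (\<exists>xs. walk R xs \<and> hd xs = y \<and> last xs = x \<and> length xs = Suc n)" for x y n
    by (metis walk_rev[OF assms] rev_rev_ident length_rev hd_rev last_rev)
  then show ?thesis unfolding gdist_def by simp
qed

definition geodesic :: "('a \<Rightarrow> 'a \<Rightarrow> bool) \<Rightarrow> 'a \<Rightarrow> 'a \<Rightarrow> 'a list \<Rightarrow> bool" where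
  "geodesic R x y xs \<longleftrightarrow> walk R xs \<and> hd xs = x \<and> last xs = y \<and> length xs = Suc (gdist R x y)"

lemma geodesic_exists:
  assumes "walk R xs" "hd xs = x" "last xs = y" shows "\<exists>g. geodesic R x y g"
proof -
  have "\<exists>n xs. walk R xs \<and> hd xs = x \<and> last xs = y \<and> length xs = Suc n"
    using assms by (metis walk_nonempty length_greater_0_conv Suc_pred)
  then show ?thesis unfolding geodesic_def gdist_def by (rule LeastI_ex)
qed

lemma geodesic_nth:
  assumes "geodesic R x y g" "i < length g"
  shows "gdist R x (g ! i) \<le> i" and "gdist R (g ! i) y + i \<le> gdist R x y"
proof -
  have g: "walk R g" "hd g = x" "last g = y" "length g = Suc (gdist R x y)"
    using assms(1) unfolding geodesic_def by auto
  show "gdist R x (g ! i) \<le> i"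
    using gdist_le_walk[OF walk_take[OF g(1), of i]] g assms(2)
    by (simp add: last_take_Suc hd_take)
  show "gdist R (g ! i) y + i \<le> gdist R x y"
    using gdist_le_walk[OF walk_drop[OF g(1) assms(2)]] g assms(2)
    by (simp add: hd_drop_conv_nth)
qed

lemma geodesic_gdist_from_start:
  assumes "geodesic R x y g" "w \<in> set g" shows "gdist R x w \<le> gdist R x y"
proof -
  obtain i where i: "i < length g" "w = g ! i" using assms(2) by (metis in_set_conv_nth)
  then have "gdist R x w \<le> i" using geodesic_nth(1)[OF assms(1)] by simp
  also have "i \<le> gdist R x y" using i(1) assms(1) unfolding geodesic_def by simp
  finally show ?thesis .
qed

lemma geodesic_distinct:
  assumes "geodesic R x y g" shows "distinct g"
proof (rule ccontr)
  assume "\<not> distinct g"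
  then obtain i j where ij: "i < j" "j < length g" "g ! i = g ! j"
    by (metis distinct_conv_nth linorder_neqE_nat)
  have g: "walk R g" "hd g = x" "last g = y" "length g = Suc (gdist R x y)"
    using assms unfolding geodesic_def by auto
  note shortcut = walk_join[OF walk_take[OF g(1), of i] walk_drop[OF g(1) ij(2)]]
  have "last (take (Suc i) g) = hd (drop j g)"
    using ij by (simp add: last_take_Suc hd_drop_conv_nth)
  from gdist_le_walk[OF shortcut(1)[OF this]] shortcut(2-5)[OF this] show False
    using g ij by (simp add: hd_take)
qed

definition walk_connected :: "('a \<Rightarrow> 'a \<Rightarrow> bool) \<Rightarrow> 'a set \<Rightarrow> bool" where
  "walk_connected R S \<longleftrightarrow>
     (\<forall>x\<in>S. \<forall>y\<in>S. \<exists>xs. walk R xs \<and> set xs \<subseteq> S \<and> hd xs = x \<and> last xs = y)"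

lemma M_connected_iff_walk_connected:
  "M_connected E k S \<longleftrightarrow> walk_connected (\<lambda>a b. real (gdist E a b) \<le> k) S"
  unfolding M_connected_def walk_connected_def walk_def by blast

lemma connected_subgraph_iff_walk_connected:
  "connected_subgraph V E S \<longleftrightarrow> S \<noteq> {} \<and> S \<subseteq> V \<and> walk_connected E S"
  unfolding connected_subgraph_def walk_connected_def by blast

lemma walk_connected_star:
  assumes "symp R"
    and "\<And>y. y \<in> S \<Longrightarrow> \<exists>ys. walk R ys \<and> set ys \<subseteq> S \<and> hd ys = c \<and> last ys = y"
  shows "walk_connected R S"
  unfolding walk_connected_def
proof (intro ballI)
  fix x y assume "x \<in> S" "y \<in> S"
  then obtain xs ys where xs: "walk R xs" "set xs \<subseteq> S" "hd xs = c" "last xs = x"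
    and ys: "walk R ys" "set ys \<subseteq> S" "hd ys = c" "last ys = y"
    using assms(2) by meson
  have "walk R (rev xs)" "last (rev xs) = hd ys"
    using walk_rev[OF assms(1) xs(1)] xs ys walk_nonempty[OF xs(1)] by (auto simp: last_rev)
  note J = walk_join[OF this(1) ys(1) this(2)]
  show "\<exists>zs. walk R zs \<and> set zs \<subseteq> S \<and> hd zs = x \<and> last zs = y"
    using J xs ys walk_nonempty[OF xs(1)] by (intro exI[of _ "rev xs @ tl ys"]) (auto simp: hd_rev)
qed

lemma walk_connected_Un:
  assumes "symp R" "walk_connected R A" "walk_connected R B" "p \<in> A" "p \<in> B"
  shows "walk_connected R (A \<union> B)"
proof (rule walk_connected_star[OF assms(1), of _ p])
  fix y assume "y \<in> A \<union> B"
  then show "\<exists>ys. walk R ys \<and> set ys \<subseteq> A \<union> B \<and> hd ys = p \<and> last ys = y"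
    using assms(2-5) unfolding walk_connected_def by blast
qed

lemma walk_connected_set:
  assumes "symp R" "walk R xs" shows "walk_connected R (set xs)"
  using walk_prefix_reaches[OF assms(2)] by (rule walk_connected_star[OF assms(1)])

lemma walk_connected_component:
  assumes "symp R"
  shows "walk_connected R {y. \<exists>ys. walk R ys \<and> set ys \<subseteq> L \<and> hd ys = x \<and> last ys = y}"
    (is "walk_connected R ?C")
proof (rule walk_connected_star[OF assms, of _ x])
  fix y assume "y \<in> ?C"
  then obtain ys where ys: "walk R ys" "set ys \<subseteq> L" "hd ys = x" "last ys = y" by blast
  have "set ys \<subseteq> ?C"
    using walk_prefix_reaches[OF ys(1)] ys(2,3) by blast
  then show "\<exists>ys. walk R ys \<and> set ys \<subseteq> ?C \<and> hd ys = x \<and> last ys = y"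
    using ys by blast
qed

lemma quasi_isometry_gdistI:
  assumes "f ` V = V'" "D \<ge> 0"
    and upper: "\<And>x y. x \<in> V \<Longrightarrow> y \<in> V \<Longrightarrow> gdist E' (f x) (f y) \<le> gdist E x y"
    and lower: "\<And>x y. x \<in> V \<Longrightarrow> y \<in> V \<Longrightarrow>
                  real (gdist E x y) \<le> (D + 1) * real (gdist E' (f x) (f y)) + D"
  shows "quasi_isometry V (gdist E) V' (gdist E') f"
  unfolding quasi_isometry_def
proof (intro conjI exI[of _ "D + 1"] ballI)
  fix x y assume "x \<in> V" "y \<in> V"
  have "D \<le> (D + 1) * (D + 1)" using \<open>D \<ge> 0\<close> mult_nonneg_nonneg[of D D] by (simp add: algebra_simps)
  then have "real (gdist E x y) \<le> (real (gdist E' (f x) (f y)) + (D + 1)) * (D + 1)"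
    using lower[OF \<open>x \<in> V\<close> \<open>y \<in> V\<close>] by (simp add: algebra_simps)
  then have "real (gdist E x y) / (D + 1) \<le> real (gdist E' (f x) (f y)) + (D + 1)"
    using \<open>D \<ge> 0\<close> by (simp add: pos_divide_le_eq)
  then show "real (gdist E x y) / (D + 1) - (D + 1) \<le> real (gdist E' (f x) (f y))"
    by simp
  have "1 * real (gdist E x y) \<le> (D + 1) * real (gdist E x y)"
    using \<open>D \<ge> 0\<close> by (intro mult_right_mono) simp_all
  then show "real (gdist E' (f x) (f y)) \<le> (D + 1) * real (gdist E x y) + (D + 1)"
    using upper[OF \<open>x \<in> V\<close> \<open>y \<in> V\<close>] \<open>D \<ge> 0\<close> by linarith
next
  fix y' assume "y' \<in> V'"
  then show "\<exists>x\<in>V. real (gdist E' (f x) y') \<le> D + 1" using assms(1,2) by force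
qed (use assms(1,2) in auto)

locale graph_metric =
  fixes V :: "'a set" and E :: "'a \<Rightarrow> 'a \<Rightarrow> bool"
  assumes graph: "graph V E" and connected: "connected_graph V E"
begin

lemma symp_E: "symp E"
  using graph by (rule graph_symp)

lemma gdist_commute: "gdist E x y = gdist E y x"
  using symp_E by (rule gdist_sym)

lemma geodesic_in_graph:
  assumes "x \<in> V" "y \<in> V" obtains g where "geodesic E x y g"
  using assms connected geodesic_exists unfolding connected_graph_def by metis

lemma geodesic_vertices: "geodesic E x y g \<Longrightarrow> x \<in> V \<Longrightarrow> set g \<subseteq> V"
  unfolding geodesic_def using walk_in_vertices[OF graph] by blast

lemma gdist_triangle:
  assumes "x \<in> V" "y \<in> V" "z \<in> V"
  shows "gdist E x z \<le> gdist E x y + gdist E y z"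
proof -
  obtain g h where g: "geodesic E x y g" and h: "geodesic E y z h"
    using geodesic_in_graph assms by metis
  then have "walk E g" "walk E h" "last g = hd h" unfolding geodesic_def by auto
  note J = walk_join[OF this]
  show ?thesis
    using gdist_le_walk[OF J(1)] J(2,3,5) g h walk_nonempty[of E h] unfolding geodesic_def by simp
qed

lemma ball_connected_subgraph:
  assumes "c \<in> V" shows "connected_subgraph V E {v\<in>V. gdist E c v \<le> r}"
    (is "connected_subgraph V E ?B")
  unfolding connected_subgraph_iff_walk_connected
proof (intro conjI)
  show "walk_connected E ?B"
  proof (rule walk_connected_star[OF symp_E, of _ c])
    fix v assume v: "v \<in> ?B"
    then obtain g where g: "geodesic E c v g" using geodesic_in_graph assms by blast
    have "gdist E c w \<le> r" if "w \<in> set g" for w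
      using geodesic_gdist_from_start[OF g that] v by simp
    then have "set g \<subseteq> ?B" using geodesic_vertices[OF g assms] by blast
    then show "\<exists>ys. walk E ys \<and> set ys \<subseteq> ?B \<and> hd ys = c \<and> last ys = v"
      using g unfolding geodesic_def by blast
  qed
qed (use assms in auto)

lemma chain_fill_walk:
  assumes "walk (\<lambda>a b. real (gdist E a b) \<le> k) xs" "set xs \<subseteq> V" "k \<ge> 0"
  shows "\<exists>P. walk E P \<and> hd P = hd xs \<and> last P = last xs \<and>
             (\<forall>w\<in>set P. \<exists>b\<in>set xs. real (gdist E b w) \<le> k)"
  using assms(1,2)
proof (induction xs rule: induct_list012)
  case (2 x)
  then show ?case using assms(3) by (intro exI[of _ "[x]"]) simp
next
  case (3 x y zs)
  obtain P where P: "walk E P" "hd P = y" "last P = last (y # zs)"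
    "\<forall>w\<in>set P. \<exists>b\<in>set (y # zs). real (gdist E b w) \<le> k"
    using 3 by auto
  obtain g where g: "geodesic E x y g" using geodesic_in_graph 3(4) by auto
  have "walk E g" "last g = hd P" using g P(2) unfolding geodesic_def by auto
  note J = walk_join[OF this(1) P(1) this(2)]
  have "real (gdist E x w) \<le> k" if "w \<in> set g" for w
    using geodesic_gdist_from_start[OF g that] 3(3) by simp
  then show ?case
    using J P g walk_nonempty[OF P(1)] unfolding geodesic_def
    by (intro exI[of _ "g @ tl P"]) (auto dest!: subsetD[OF J(4)])
qed (simp add: walk_def)

lemma gdist_le_card_cover:
  assumes "finite S" "S \<subseteq> V" "walk E P" "set P \<subseteq> V"
    and "\<forall>w\<in>set P. \<exists>s\<in>S. real (gdist E s w) \<le> r"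
  shows "real (gdist E (hd P) (last P)) \<le> real (card S) * (2 * r + 1)"
  using assms
proof (induction "card S" arbitrary: S P)
  case 0
  then show ?case using walk_nonempty[of E P] by auto
next
  case (Suc m)
  have "hd P \<in> set P" using walk_nonempty[OF Suc.prems(3)] by simp
  then obtain s0 where s0: "s0 \<in> S" "real (gdist E s0 (hd P)) \<le> r" using Suc.prems(5) by blast
  \<comment> \<open>Cut P after its last vertex near s0; the rest is covered by S - {s0}.\<close>
  obtain ys zs where P: "P = ys @ zs" "ys \<noteq> []" and ys: "real (gdist E s0 (last ys)) \<le> r"
    and zs: "\<forall>z\<in>set zs. \<not> real (gdist E s0 z) \<le> r"
    using split_after_last[OF \<open>hd P \<in> set P\<close>, of "\<lambda>w. real (gdist E s0 w) \<le> r"] s0(2) by blast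
  have V: "s0 \<in> V" "hd P \<in> V" "last ys \<in> V" "set zs \<subseteq> V" using Suc.prems(2,4) s0 P by auto
  have "r \<ge> 0" using s0(2) by (meson of_nat_0_le_iff order_trans)
  have "gdist E (hd P) (last ys) \<le> gdist E s0 (hd P) + gdist E s0 (last ys)"
    using gdist_triangle[of "hd P" s0 "last ys"] V by (simp add: gdist_commute)
  then have near: "real (gdist E (hd P) (last ys)) \<le> 2 * r" using s0(2) ys by simp
  show ?case
  proof (cases "zs = []")
    case True
    then have "real (gdist E (hd P) (last P)) \<le> 2 * r" using near P by simp
    also have "\<dots> \<le> 1 * (2 * r + 1)" by simp
    also have "\<dots> \<le> real (card S) * (2 * r + 1)"
      using \<open>r \<ge> 0\<close> Suc.hyps(2) by (intro mult_right_mono) simp_all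
    finally show ?thesis .
  next
    case False
    note split = walk_appendD[OF Suc.prems(3)[unfolded P(1)] P(2) False]
    have cover: "\<forall>w\<in>set zs. \<exists>s\<in>S - {s0}. real (gdist E s w) \<le> r"
    proof
      fix w assume "w \<in> set zs"
      then obtain s where "s \<in> S" "real (gdist E s w) \<le> r" using Suc.prems(5) P(1) by auto
      then show "\<exists>s\<in>S - {s0}. real (gdist E s w) \<le> r" using zs \<open>w \<in> set zs\<close> by blast
    qed
    have "m = card (S - {s0})" "finite (S - {s0})" "S - {s0} \<subseteq> V"
      using Suc.hyps(2) Suc.prems(1,2) s0(1) by auto
    from Suc.hyps(1)[OF this split(2) V(4) cover] this(1)
    have IH: "real (gdist E (hd zs) (last P)) \<le> real m * (2 * r + 1)" using P(1) False by simp
    have "hd zs \<in> V" using V(4) False by (meson hd_in_set subsetD)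
    then have "gdist E (hd P) (last P) \<le> gdist E (hd P) (last ys) + 1 + gdist E (hd zs) (last P)"
      using gdist_triangle[of "hd P" "last ys" "last P"] gdist_triangle[of "last ys" "hd zs" "last P"]
        gdist_edge[of E, OF split(3)] V Suc.prems(4) walk_nonempty[OF Suc.prems(3)] by force
    then show ?thesis using near IH Suc.hyps(2)[symmetric] by (simp add: algebra_simps)
  qed
qed

lemma fat_bottleneck_cover:
  assumes "fat_bottlenecked V E M n" "x0 \<in> V" "connected_subgraph V E Y"
    and far: "\<And>w. w \<in> Y \<Longrightarrow> rho + M < gdist E x0 w"
  obtains S where "S \<subseteq> V" "finite S" "card S = n"
    "\<And>p. p \<in> Y \<Longrightarrow> \<exists>s\<in>S. gdist E s p + rho < 2 * M + gdist E x0 p"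
proof -
  define X where "X = {v\<in>V. gdist E x0 v \<le> rho}"
  have X: "connected_subgraph V E X" unfolding X_def using assms(2) by (rule ball_connected_subgraph)
  have Y: "Y \<subseteq> V" using assms(3) unfolding connected_subgraph_def by blast
  have "M_disjoint E M X Y" unfolding M_disjoint_def
  proof (intro ballI)
    fix u w assume "u \<in> X" "w \<in> Y"
    then show "gdist E u w > M"
      using gdist_triangle[OF assms(2), of u w] far[of w] Y unfolding X_def by force
  qed
  then obtain S where S: "S \<subseteq> V - (X \<union> Y)" "finite S" "card S = n"
    and cut: "\<And>xs. gpath E xs \<Longrightarrow> hd xs \<in> X \<Longrightarrow> last xs \<in> Y \<Longrightarrow> \<exists>v\<in>set xs. v \<in> nbhd V E M S"
    using assms(1) X assms(3) unfolding fat_bottlenecked_def by meson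
  have "\<exists>s\<in>S. gdist E s p + rho < 2 * M + gdist E x0 p" if p: "p \<in> Y" for p
  proof -
    \<comment> \<open>A geodesic from x0 to p passes within M of some s outside the ball, at a point v
      with d(x0, v) > rho - M; hence d(s, p) < M + d(v, p) < 2 M + d(x0, p) - rho.\<close>
    obtain g where g: "geodesic E x0 p g" using geodesic_in_graph assms(2) p Y by blast
    then have "gpath E g" "hd g = x0" "last g = p"
      using geodesic_distinct[OF g] g unfolding geodesic_def gpath_def by auto
    moreover have "x0 \<in> X" using assms(2) unfolding X_def by simp
    ultimately obtain v where v: "v \<in> set g" "v \<in> nbhd V E M S" using cut p by metis
    then obtain s where s: "s \<in> S" "gdist E s v < M" unfolding nbhd_def by blast
    obtain i where i: "i < length g" "v = g ! i" using v(1) by (metis in_set_conv_nth)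
    have "s \<in> V" "s \<notin> X" "v \<in> V" using S s geodesic_vertices[OF g assms(2)] v(1) by auto
    then have "rho < gdist E x0 s" "gdist E x0 s \<le> gdist E x0 v + gdist E v s"
      "gdist E s p \<le> gdist E s v + gdist E v p"
      using gdist_triangle assms(2) p Y unfolding X_def by auto
    moreover have "gdist E x0 v \<le> i" "gdist E v p + i \<le> gdist E x0 p"
      using geodesic_nth[OF g i(1)] i(2) by simp_all
    ultimately show ?thesis
      using s gdist_commute[of v s] by (intro bexI[OF _ s(1)]) linarith
  qed
  then show ?thesis using that S by blast
qed

lemma annulus_walk_diameter:
  assumes bottleneck: "fat_bottlenecked V E M n" and "x0 \<in> V" "walk E P" "set P \<subseteq> V"
    and "M + 1 \<le> a"
    and annulus: "\<And>p. p \<in> set P \<Longrightarrow> a < real (gdist E x0 p) \<and> real (gdist E x0 p) \<le> a + h"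
  shows "real (gdist E (hd P) (last P)) \<le> real n * (2 * (3 * real M + h + 2) + 1)"
proof -
  define rho where "rho = nat \<lfloor>a - M - 1\<rfloor>"
  have rho: "real rho \<le> a - M - 1" "a - M - 2 < real rho"
    using \<open>M + 1 \<le> a\<close> unfolding rho_def by linarith+
  have "connected_subgraph V E (set P)"
    unfolding connected_subgraph_iff_walk_connected
    using walk_connected_set[OF symp_E assms(3)] walk_nonempty[OF assms(3)] assms(4) by simp
  moreover have "rho + M < gdist E x0 p" if "p \<in> set P" for p
    using annulus[OF that] rho by linarith
  ultimately obtain S where S: "S \<subseteq> V" "finite S" "card S = n"
    and close: "\<And>p. p \<in> set P \<Longrightarrow> \<exists>s\<in>S. gdist E s p + rho < 2 * M + gdist E x0 p"
    using fat_bottleneck_cover[OF bottleneck assms(2)] by metis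
  have "\<forall>p\<in>set P. \<exists>s\<in>S. real (gdist E s p) \<le> 3 * real M + h + 2"
  proof
    fix p assume "p \<in> set P"
    then obtain s where "s \<in> S" "gdist E s p + rho < 2 * M + gdist E x0 p" using close by blast
    then show "\<exists>s\<in>S. real (gdist E s p) \<le> 3 * real M + h + 2"
      using annulus[OF \<open>p \<in> set P\<close>] rho by (intro bexI[of _ s]) linarith+
  qed
  from gdist_le_card_cover[OF S(2,1) assms(3,4) this] show ?thesis using S(3) by simp
qed

lemma annulus_diameter_bound:
  assumes bottleneck: "fat_bottlenecked V E M n" and "x0 \<in> V" "k \<ge> 0"
    and B: "M_connected E k B" "B \<subseteq> V"
    and annulus: "\<And>b. b \<in> B \<Longrightarrow> t < real (gdist E x0 b) \<and> real (gdist E x0 b) \<le> t + w"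
    and "x \<in> B" "y \<in> B"
  shows "real (gdist E x y) \<le>
           max (2 * (k + real M + 1 + w)) (real n * (2 * (3 * real M + w + 2 * k + 2) + 1))"
proof (cases "t < k + M + 1")
  case True
  have "gdist E x y \<le> gdist E x0 x + gdist E x0 y"
    using gdist_triangle[of x x0 y] assms(2,7,8) B(2) by (auto simp: gdist_commute)
  then have "real (gdist E x y) \<le> real (gdist E x0 x) + real (gdist E x0 y)" by simp
  then have "real (gdist E x y) \<le> 2 * (k + M + 1 + w)"
    using annulus[OF \<open>x \<in> B\<close>] annulus[OF \<open>y \<in> B\<close>] True
    unfolding distrib_left by linarith
  then show ?thesis by (rule max.coboundedI1)
next
  case False
  obtain xs where "walk (\<lambda>a b. real (gdist E a b) \<le> k) xs" "set xs \<subseteq> B" "hd xs = x" "last xs = y"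
    using B(1) assms(7,8) unfolding M_connected_iff_walk_connected walk_connected_def by blast
  then obtain P where P: "walk E P" "hd P = x" "last P = y"
    and near: "\<forall>p\<in>set P. \<exists>b\<in>B. real (gdist E b p) \<le> k"
    using chain_fill_walk[of k xs] assms(3) B(2) by blast
  have PV: "set P \<subseteq> V" using walk_in_vertices[OF graph P(1)] P(2) assms(7) B(2) by blast
  have "t - k < real (gdist E x0 p) \<and> real (gdist E x0 p) \<le> t - k + (w + 2 * k)"
    if p: "p \<in> set P" for p
  proof -
    obtain b where b: "b \<in> B" "real (gdist E b p) \<le> k" using near p by blast
    have "gdist E x0 p \<le> gdist E x0 b + gdist E b p" "gdist E x0 b \<le> gdist E x0 p + gdist E b p"
      using gdist_triangle assms(2) b(1) B(2) PV p gdist_commute by (metis subsetD)+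
    then show ?thesis using annulus[OF b(1)] b(2) by linarith
  qed
  from annulus_walk_diameter[OF bottleneck assms(2) P(1) PV _ this] False P(2,3)
  have "real (gdist E x y) \<le> real n * (2 * (3 * real M + (w + 2 * k) + 2) + 1)" by simp
  then show ?thesis by (simp add: algebra_simps)
qed

end

locale skeleton = graph_metric +
  fixes x0 :: 'a and lam k :: real
  assumes root: "x0 \<in> V" and scale_pos: "lam > 0" and connectivity_nonneg: "k \<ge> 0"
begin

abbreviation "block \<equiv> is_block V E x0 lam k"
abbreviation "f \<equiv> skel_map V E x0 lam k"
abbreviation "Esk \<equiv> skel_E V E x0 lam k"

lemma layer_unique: "x \<in> layer V E x0 lam N \<Longrightarrow> x \<in> layer V E x0 lam N' \<Longrightarrow> N = N'"
proof -
  assume "x \<in> layer V E x0 lam N" "x \<in> layer V E x0 lam N'"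
  then have "real_of_int N * lam < (real_of_int N' + 1) * lam"
    "real_of_int N' * lam < (real_of_int N + 1) * lam"
    unfolding layer_def by auto
  then have "real_of_int N < real_of_int N' + 1" "real_of_int N' < real_of_int N + 1"
    using scale_pos by (simp_all add: mult_less_cancel_right)
  then show "N = N'" by linarith
qed

lemma layer_exists: "x \<in> V \<Longrightarrow> \<exists>N. x \<in> layer V E x0 lam N"
proof -
  assume "x \<in> V"
  define N where "N = \<lceil>real (gdist E x x0) / lam\<rceil> - 1"
  have "real_of_int N < real (gdist E x x0) / lam" "real (gdist E x x0) / lam \<le> real_of_int N + 1"
    unfolding N_def by linarith+
  then have "real_of_int N * lam < real (gdist E x x0)"
    "real (gdist E x x0) \<le> (real_of_int N + 1) * lam"
    using scale_pos by (simp_all add: field_simps)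
  then show ?thesis using \<open>x \<in> V\<close> unfolding layer_def by blast
qed

lemma symp_gdist_le: "symp (\<lambda>a b. real (gdist E a b) \<le> k)"
  by (rule sympI) (simp add: gdist_commute)

lemma block_vertices: "block B \<Longrightarrow> B \<subseteq> V"
  unfolding is_block_def layer_def by blast

lemma blockE:
  assumes "block B"
  obtains N where "B \<subseteq> layer V E x0 lam N" "M_connected E k B"
    "\<And>B'. B \<subseteq> B' \<Longrightarrow> B' \<subseteq> layer V E x0 lam N \<Longrightarrow> M_connected E k B' \<Longrightarrow> B' = B"
proof -
  have "\<exists>N. B \<subseteq> layer V E x0 lam N \<and> M_connected E k B \<and>
     (\<forall>B'. B \<subseteq> B' \<and> B' \<subseteq> layer V E x0 lam N \<and> M_connected E k B' \<longrightarrow> B' = B)"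
    using assms unfolding is_block_def by (rule conjunct2)
  then show ?thesis using that by metis
qed

lemma block_exists:
  assumes "x \<in> V" obtains B where "block B" "x \<in> B"
proof -
  let ?R = "\<lambda>a b. real (gdist E a b) \<le> k"
  obtain N where N: "x \<in> layer V E x0 lam N" using layer_exists assms by blast
  define C where "C = {y. \<exists>ys. walk ?R ys \<and> set ys \<subseteq> layer V E x0 lam N \<and> hd ys = x \<and> last ys = y}"
  have "x \<in> C" unfolding C_def using N by (intro CollectI exI[of _ "[x]"]) auto
  moreover have "C \<subseteq> layer V E x0 lam N" unfolding C_def by (force simp: walk_def)
  moreover have "M_connected E k C"
    unfolding M_connected_iff_walk_connected C_def by (rule walk_connected_component[OF symp_gdist_le])
  moreover have "B' = C" if "C \<subseteq> B'" "B' \<subseteq> layer V E x0 lam N" "M_connected E k B'" for B'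
    using that \<open>x \<in> C\<close> unfolding M_connected_iff_walk_connected walk_connected_def C_def
    by (blast intro!: subset_antisym)
  ultimately have "block C" unfolding is_block_def by blast
  then show ?thesis using \<open>x \<in> C\<close> by (rule that)
qed

lemma block_unique:
  assumes "block B" "block B'" "x \<in> B" "x \<in> B'" shows "B = B'"
proof -
  obtain N where N: "B \<subseteq> layer V E x0 lam N" "M_connected E k B"
    and max: "\<And>B''. B \<subseteq> B'' \<Longrightarrow> B'' \<subseteq> layer V E x0 lam N \<Longrightarrow> M_connected E k B'' \<Longrightarrow> B'' = B"
    using assms(1) by (rule blockE) blast
  obtain N' where N': "B' \<subseteq> layer V E x0 lam N'" "M_connected E k B'"
    and max': "\<And>B''. B' \<subseteq> B'' \<Longrightarrow> B'' \<subseteq> layer V E x0 lam N' \<Longrightarrow> M_connected E k B'' \<Longrightarrow> B'' = B'"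
    using assms(2) by (rule blockE) blast
  have "N = N'" using layer_unique N(1) N'(1) assms(3,4) by blast
  have "M_connected E k (B \<union> B')"
    using walk_connected_Un[OF symp_gdist_le] N(2) N'(2) assms(3,4)
    unfolding M_connected_iff_walk_connected by blast
  then have "B \<union> B' = B" "B \<union> B' = B'"
    using max max' N(1) N'(1) \<open>N = N'\<close> by auto
  then show ?thesis by simp
qed

lemma skel_map_block: assumes "x \<in> V" shows "block (f x)" and "x \<in> f x"
proof -
  obtain B where "block B" "x \<in> B" using block_exists[OF assms] .
  then have "\<exists>!B. block B \<and> x \<in> B" using block_unique by blast
  then have "block (f x) \<and> x \<in> f x" unfolding skel_map_def by (rule theI')
  then show "block (f x)" "x \<in> f x" by auto
qed

lemma skel_map_eq: "block B \<Longrightarrow> x \<in> B \<Longrightarrow> f x = B"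
  using block_unique skel_map_block block_vertices by blast

lemma skeleton_graph: "graph (skel_V V E x0 lam k) Esk"
  using graph unfolding graph_def skel_V_def skel_E_def by blast

lemma skel_map_image: "f ` V = skel_V V E x0 lam k"
proof
  show "f ` V \<subseteq> skel_V V E x0 lam k" using skel_map_block(1) unfolding skel_V_def by blast
  show "skel_V V E x0 lam k \<subseteq> f ` V"
  proof
    fix B assume "B \<in> skel_V V E x0 lam k"
    then have "block B" unfolding skel_V_def by simp
    moreover obtain x where "x \<in> B" using \<open>block B\<close> unfolding is_block_def by blast
    ultimately show "B \<in> f ` V" using skel_map_eq block_vertices by blast
  qed
qed

lemma block_diameter_bound:
  assumes "fat_bottlenecked V E M n"
  obtains D where "D \<ge> 0" "\<And>B x y. block B \<Longrightarrow> x \<in> B \<Longrightarrow> y \<in> B \<Longrightarrow> real (gdist E x y) \<le> D"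
proof
  let ?D = "max (2 * (k + real M + 1 + lam)) (real n * (2 * (3 * real M + lam + 2 * k + 2) + 1))"
  show "?D \<ge> 0" using connectivity_nonneg scale_pos by simp
  fix B x y assume "block B" "x \<in> B" "y \<in> B"
  obtain N where N: "B \<subseteq> layer V E x0 lam N" "M_connected E k B"
    using \<open>block B\<close> by (rule blockE) blast
  have radial: "real_of_int N * lam < real (gdist E x0 b) \<and> real (gdist E x0 b) \<le> real_of_int N * lam + lam"
    if "b \<in> B" for b
    using N(1) that unfolding layer_def by (auto simp: gdist_commute algebra_simps)
  show "real (gdist E x y) \<le> ?D"
    by (rule annulus_diameter_bound[OF assms root connectivity_nonneg N(2) block_vertices[OF \<open>block B\<close>]
          radial \<open>x \<in> B\<close> \<open>y \<in> B\<close>])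
qed

lemma skeleton_walk_map:
  assumes "walk E xs" "set xs \<subseteq> V" shows "walk Esk (map f xs)"
  using assms(1)
proof (rule walk_map)
  fix a b assume "a \<in> set xs" "b \<in> set xs" "E a b"
  then show "Esk (f a) (f b)" using assms(2) skel_map_block unfolding skel_E_def by blast
qed

lemma skel_gdist_le_gdist:
  assumes "x \<in> V" "y \<in> V" shows "gdist Esk (f x) (f y) \<le> gdist E x y"
proof -
  obtain g where g: "geodesic E x y g" using geodesic_in_graph assms .
  then have "walk Esk (map f g)"
    using skeleton_walk_map geodesic_vertices[OF g assms(1)] unfolding geodesic_def by blast
  from gdist_le_walk[OF this] show ?thesis
    using g walk_nonempty[of E g] unfolding geodesic_def by (simp add: hd_map last_map)
qed

lemma gdist_le_skeleton_walk:
  assumes diam: "\<And>B u v. block B \<Longrightarrow> u \<in> B \<Longrightarrow> v \<in> B \<Longrightarrow> real (gdist E u v) \<le> D"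
  shows "walk Esk Bs \<Longrightarrow> set Bs \<subseteq> skel_V V E x0 lam k \<Longrightarrow> u \<in> hd Bs \<Longrightarrow> v \<in> last Bs \<Longrightarrow>
         real (gdist E u v) \<le> (D + 1) * real (length Bs - 1) + D"
proof (induction Bs arbitrary: u rule: induct_list012)
  case (2 B)
  then show ?case using diam unfolding skel_V_def by simp
next
  case (3 B B' Bs)
  then obtain a b where ab: "a \<in> B" "b \<in> B'" "E a b" "block B" "block B'"
    unfolding skel_E_def by auto
  have IH: "real (gdist E b v) \<le> (D + 1) * real (length Bs) + D"
    using "3.IH"(2) "3.prems" ab(2) by simp
  have "last (B' # Bs) \<in> set (B # B' # Bs)" by simp
  then have "block (last (B' # Bs))" using "3.prems"(2) unfolding skel_V_def by blast
  then have "v \<in> V" using "3.prems"(4) block_vertices by auto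
  moreover have "u \<in> V" "a \<in> V" "b \<in> V" using ab block_vertices "3.prems"(3) by auto
  ultimately have "gdist E u v \<le> gdist E u a + gdist E a b + gdist E b v"
    using gdist_triangle[of u a v] gdist_triangle[of a b v] by simp
  then show ?case
    using diam[OF ab(4) \<open>u \<in> hd (B # B' # Bs)\<close>[simplified] ab(1)] gdist_edge[of E, OF ab(3)] IH
    by (simp add: algebra_simps)
qed (simp add: walk_def)

lemma gdist_le_skel_gdist:
  assumes diam: "\<And>B u v. block B \<Longrightarrow> u \<in> B \<Longrightarrow> v \<in> B \<Longrightarrow> real (gdist E u v) \<le> D"
    and "x \<in> V" "y \<in> V"
  shows "real (gdist E x y) \<le> (D + 1) * real (gdist Esk (f x) (f y)) + D"
proof -
  obtain g where g: "geodesic E x y g" using geodesic_in_graph assms(2,3) .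
  then have "walk Esk (map f g)" "hd (map f g) = f x" "last (map f g) = f y"
    using skeleton_walk_map geodesic_vertices[OF g assms(2)] walk_nonempty[of E g]
    unfolding geodesic_def by (auto simp: hd_map last_map)
  then obtain Cs where Cs: "geodesic Esk (f x) (f y) Cs" by (metis geodesic_exists)
  then have "walk Esk Cs" "hd Cs = f x" "last Cs = f y" unfolding geodesic_def by auto
  moreover have "set Cs \<subseteq> skel_V V E x0 lam k"
    using walk_in_vertices[OF skeleton_graph \<open>walk Esk Cs\<close>] \<open>hd Cs = f x\<close> skel_map_image assms(2)
    by blast
  ultimately have "real (gdist E x y) \<le> (D + 1) * real (length Cs - 1) + D"
    using gdist_le_skeleton_walk[OF diam] skel_map_block assms(2,3) by simp
  then show ?thesis using Cs unfolding geodesic_def by simp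
qed

end

theorem corollary7:
  fixes V :: "'a set" and E :: "'a \<Rightarrow> 'a \<Rightarrow> bool"
  assumes "graph V E" and "connected_graph V E" and "unbounded_graph V E"
    and "coarsely_bottlenecked V E"
    and "x0 \<in> V" and "(lam::real) \<ge> 1" and "(k::real) \<ge> 1"
  shows "quasi_isometry V (gdist E) (skel_V V E x0 lam k) (gdist (skel_E V E x0 lam k))
           (skel_map V E x0 lam k)"
proof -
  obtain M n where bottleneck: "fat_bottlenecked V E M n"
    using assms(4) unfolding coarsely_bottlenecked_def by blast
  interpret skeleton V E x0 lam k
    using assms by unfold_locales auto
  obtain D where "D \<ge> 0"
    and diam: "\<And>B u v. block B \<Longrightarrow> u \<in> B \<Longrightarrow> v \<in> B \<Longrightarrow> real (gdist E u v) \<le> D"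
    using block_diameter_bound[OF bottleneck] by blast
  show ?thesis
    using skel_map_image \<open>D \<ge> 0\<close> skel_gdist_le_gdist gdist_le_skel_gdist[OF diam]
    by (rule quasi_isometry_gdistI)
qed

end
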